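(* Let $P$ be an orthogonal projector on $\mathcal H$. The subspace $P\mathcal H$ is lazy, i.e. for every $\rho\in\mathbf S$ with $\rho=P\rho P$ one has $\frac{d}{dt}\mathrm{Tr}[P\,\mathcal T^t(\rho)\,P]\big|_{t=0}=0$, if and only if $h_\alpha P=Ph_\alpha P$ for every $\alpha$.
   Context: Let $\mathcal H$ be a finite-dimensional complex Hilbert space, $H=H^\dagger$ and $\{h_\alpha\}$ a finite family of operators on $\mathcal H$, $\mathcal D(\rho)=-i[H,\rho]+\sum_\alpha(h_\alpha\rho h_\alpha^\dagger-\tfrac12(h_\alpha^\dagger h_\alpha\rho+\rho h_\alpha^\dagger h_\alpha))$, $\mathcal T^t=e^{t\mathcal D}$. $\mathbf S$ is the set of density matrices. *)

theory Defs
  imports "HOL-Analysis.Analysis"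
begin

text \<open>Operators on the finite-dimensional Hilbert space C^n, n = CARD('n),
  are represented as complex n x n matrices of type complex^'n^'n.\<close>

definition cadj :: "complex^'n^'n \<Rightarrow> complex^'n^'n" where
  "cadj A = (\<chi> i j. cnj (A $ j $ i))"

definition csmat :: "complex \<Rightarrow> complex^'n^'n \<Rightarrow> complex^'n^'n" where
  "csmat c A = (\<chi> i j. c * A $ i $ j)"

definition cinner :: "complex^'n \<Rightarrow> complex^'n \<Rightarrow> complex" where
  "cinner x y = (\<Sum>i\<in>UNIV. cnj (x $ i) * y $ i)"

definition density_matrix :: "complex^'n^'n \<Rightarrow> bool" where
  "density_matrix \<rho> \<longleftrightarrow>
     (\<forall>x. Im (cinner x (\<rho> *v x)) = 0 \<and> 0 \<le> Re (cinner x (\<rho> *v x))) \<and> trace \<rho> = 1"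

definition orth_proj :: "complex^'n^'n \<Rightarrow> bool" where
  "orth_proj P \<longleftrightarrow> P ** P = P \<and> cadj P = P"

definition lindblad ::
  "complex^'n^'n \<Rightarrow> ('a \<Rightarrow> complex^'n^'n) \<Rightarrow> 'a set \<Rightarrow> complex^'n^'n \<Rightarrow> complex^'n^'n" where
  "lindblad H h A \<rho> =
     csmat (- \<i>) (H ** \<rho> - \<rho> ** H)
     + (\<Sum>\<alpha>\<in>A. h \<alpha> ** \<rho> ** cadj (h \<alpha>)
          - csmat (1/2) (cadj (h \<alpha>) ** h \<alpha> ** \<rho> + \<rho> ** cadj (h \<alpha>) ** h \<alpha>))"

definition lindblad_semigroup ::
  "complex^'n^'n \<Rightarrow> ('a \<Rightarrow> complex^'n^'n) \<Rightarrow> 'a set \<Rightarrow> real \<Rightarrow> complex^'n^'n \<Rightarrow> complex^'n^'n" where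
  "lindblad_semigroup H h A t \<rho> =
     (\<Sum>k. (t ^ k / fact k) *\<^sub>R ((lindblad H h A ^^ k) \<rho>))"

end

theory Submission
  imports Defs
begin

(* The population Tr (P T^t(rho) P) of the subspace PH is a bounded
   linear functional applied to the exponential series of the bounded linear
   generator D; such a function is an entire power series in t, so its derivative
   at t = 0 is the flux Tr (P D(rho) P).  Laziness is therefore equivalent to the
   vanishing of this flux for all states supported in PH.

   For rho = P rho P the cyclic trace cancels the Hamiltonian and the
   anticommutator terms, leaving the flux  sum_a Tr (P h_a rho h_a^+) - Tr (h_a rho h_a^+).
   If h_a P = P h_a P every summand vanishes.  Conversely, for a pure state |v><v|
   with v in PH the summand equals -||(1 - P) h_a v||^2, so zero flux forces h_a to
   map PH into itself, i.e. h_a P = P h_a P. *)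

lemma norm_funpow_le:
  fixes L :: "'a::real_normed_vector \<Rightarrow> 'a"
  assumes bound: "\<And>x. norm (L x) \<le> norm x * K" and "0 \<le> K"
  shows "norm ((L ^^ k) x) \<le> norm x * K ^ k"
proof (induction k)
  case 0
  then show ?case by simp
next
  case (Suc k)
  have "norm ((L ^^ Suc k) x) \<le> norm ((L ^^ k) x) * K" using bound by simp
  also have "\<dots> \<le> norm x * K ^ k * K" using Suc \<open>0 \<le> K\<close> by (rule mult_right_mono)
  finally show ?case by (simp add: mult_ac)
qed

lemma summable_exp_dominated:
  fixes a :: "nat \<Rightarrow> 'a::banach"
  assumes "\<And>k. norm (a k) \<le> M * (R ^ k / fact k)"
  shows "summable a"
proof (rule summable_comparison_test)
  show "\<exists>N. \<forall>k\<ge>N. norm (a k) \<le> M * (R ^ k / fact k)" using assms by blast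
  show "summable (\<lambda>k. M * (R ^ k / fact k))"
    using summable_exp[of R] by (intro summable_mult) (simp add: divide_inverse mult.commute)
qed

lemma entire_powser_has_vector_derivative_0:
  fixes c :: "nat \<Rightarrow> 'a::{real_normed_field,banach}"
  assumes "\<And>z. summable (\<lambda>k. c k * z ^ k)"
  shows "((\<lambda>t. \<Sum>k. c k * of_real t ^ k) has_vector_derivative c 1) (at 0 within S)"
proof -
  have "((\<lambda>z. \<Sum>k. c k * z ^ k) has_field_derivative (\<Sum>k. diffs c k * 0 ^ k)) (at 0)"
    by (rule termdiffs_strong_converges_everywhere[OF assms])
  moreover have "(\<Sum>k. diffs c k * 0 ^ k) = c 1"
    by (simp add: diffs_def)
  ultimately show ?thesis
    using has_vector_derivative_real_field[of "\<lambda>z. \<Sum>k. c k * z ^ k" _ 0] by simp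
qed

text \<open>For a bounded linear \<open>L\<close>, the exponential series \<open>t \<mapsto> e\<^sup>t\<^sup>L x\<close>, observed through a
  bounded linear functional \<open>\<phi>\<close>, has derivative \<open>\<phi> (L x)\<close> at \<open>t = 0\<close>: the observed
  function is an entire power series with linear coefficient \<open>\<phi> (L x)\<close>.\<close>
lemma exp_series_functional_has_vector_derivative:
  fixes L :: "'a::banach \<Rightarrow> 'a" and \<phi> :: "'a \<Rightarrow> 'b::{real_normed_field,banach}"
  assumes L: "bounded_linear L" and \<phi>: "bounded_linear \<phi>"
  shows "((\<lambda>t. \<phi> (\<Sum>k. (t ^ k / fact k) *\<^sub>R (L ^^ k) x)) has_vector_derivative \<phi> (L x))
           (at 0 within S)"
proof -
  obtain K where K: "K > 0" "\<And>y. norm (L y) \<le> norm y * K"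
    using bounded_linear.pos_bounded[OF L] by blast
  obtain K\<phi> where K\<phi>: "K\<phi> > 0" "\<And>y. norm (\<phi> y) \<le> norm y * K\<phi>"
    using bounded_linear.pos_bounded[OF \<phi>] by blast
  have iterate: "norm ((L ^^ k) x) \<le> norm x * K ^ k" for k
    using norm_funpow_le[OF K(2)] K(1) by simp
  define c where "c k = \<phi> ((L ^^ k) x) / of_real (fact k)" for k
  have series: "summable (\<lambda>k. (t ^ k / fact k) *\<^sub>R (L ^^ k) x)" for t :: real
  proof (rule summable_exp_dominated)
    fix k
    have "norm ((t ^ k / fact k) *\<^sub>R (L ^^ k) x) = (\<bar>t\<bar> ^ k / fact k) * norm ((L ^^ k) x)"
      by (simp add: power_abs)
    also have "\<dots> \<le> (\<bar>t\<bar> ^ k / fact k) * (norm x * K ^ k)"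
      by (intro mult_left_mono iterate) auto
    finally show "norm ((t ^ k / fact k) *\<^sub>R (L ^^ k) x) \<le> norm x * ((\<bar>t\<bar> * K) ^ k / fact k)"
      by (simp add: power_mult_distrib power_abs mult_ac)
  qed
  have coeffs: "summable (\<lambda>k. c k * z ^ k)" for z
  proof (rule summable_exp_dominated)
    fix k
    have "norm (\<phi> ((L ^^ k) x)) \<le> norm x * K ^ k * K\<phi>"
      using K\<phi> iterate order_trans mult_right_mono by (metis less_imp_le)
    then have "norm (c k * z ^ k) \<le> norm x * K ^ k * K\<phi> / fact k * norm z ^ k"
      by (auto simp: c_def norm_mult norm_divide norm_power intro!: mult_right_mono divide_right_mono)
    then show "norm (c k * z ^ k) \<le> (K\<phi> * norm x) * ((K * norm z) ^ k / fact k)"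
      by (simp add: power_mult_distrib mult_ac)
  qed
  have "\<phi> (\<Sum>k. (t ^ k / fact k) *\<^sub>R (L ^^ k) x) = (\<Sum>k. c k * of_real t ^ k)" for t :: real
    by (simp add: bounded_linear.suminf[OF \<phi> series] linear_scale[OF bounded_linear.linear[OF \<phi>]]
        c_def scaleR_conv_of_real field_simps)
  moreover have "c 1 = \<phi> (L x)" by (simp add: c_def)
  ultimately show ?thesis
    using entire_powser_has_vector_derivative_0[OF coeffs] by simp
qed

lemma matrix_add_rdistrib: "(A + B) ** C = A ** C + B ** C"
  by (vector matrix_matrix_mult_def sum.distrib[symmetric] field_simps)

lemma matrix_diff_rdistrib: "((A::'a::ring_1^'n^'m) - B) ** C = A ** C - B ** C"
  by (vector matrix_matrix_mult_def sum_subtractf[symmetric] field_simps)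

lemma matrix_sum_rdistrib: "(\<Sum>\<alpha>\<in>S. f \<alpha>) ** (B::'a::semiring_1^'n^'n) = (\<Sum>\<alpha>\<in>S. f \<alpha> ** B)"
  by (induction S rule: infinite_finite_induct) (auto simp: matrix_add_rdistrib)

lemma csmat_mult_left: "csmat c A ** B = csmat c (A ** B)"
  by (simp add: csmat_def matrix_matrix_mult_def vec_eq_iff sum_distrib_left mult.assoc)

lemma csmat_add: "csmat c (A + B) = csmat c A + csmat c B"
  by (simp add: csmat_def vec_eq_iff algebra_simps)

lemma csmat_diff: "csmat c (A - B) = csmat c A - csmat c B"
  by (simp add: csmat_def vec_eq_iff algebra_simps)

lemma csmat_scaleR: "csmat c (r *\<^sub>R A) = r *\<^sub>R csmat c A"
  by (simp add: csmat_def vec_eq_iff scaleR_conv_of_real algebra_simps)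

lemma trace_csmat: "trace (csmat c A) = c * trace A"
  by (simp add: trace_def csmat_def sum_distrib_left)

lemma trace_scaleR: "trace (r *\<^sub>R (A::complex^'n^'n)) = r *\<^sub>R trace A"
  by (simp add: trace_def scaleR_sum_right)

lemma trace_sum: "trace (\<Sum>\<alpha>\<in>S. f \<alpha>) = (\<Sum>\<alpha>\<in>S. trace (f \<alpha> :: complex^'n^'n))"
  by (induction S rule: infinite_finite_induct) (auto simp: trace_add trace_0[unfolded mat_0])

lemma bounded_linear_lindblad: "bounded_linear (lindblad H h A)"
proof -
  have "linear (lindblad H h A)"
  proof (rule linearI)
    show "lindblad H h A (x + y) = lindblad H h A x + lindblad H h A y" for x y
      unfolding lindblad_def
      by (simp add: matrix_add_ldistrib matrix_add_rdistrib csmat_add csmat_diff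
          sum.distrib[symmetric] algebra_simps)
    show "lindblad H h A (r *\<^sub>R x) = r *\<^sub>R lindblad H h A x" for r x
      unfolding lindblad_def
      by (simp add: matrix_scalar_ac scalar_matrix_assoc[symmetric] csmat_add csmat_diff
          csmat_scaleR scaleR_sum_right scaleR_diff_right scaleR_add_right)
  qed
  then show ?thesis by (simp add: linear_conv_bounded_linear)
qed

lemma bounded_linear_compressed_trace: "bounded_linear (\<lambda>X::complex^'n^'n. trace (P ** X ** P))"
proof -
  have "linear (\<lambda>X::complex^'n^'n. trace (P ** X ** P))"
    by (rule linearI)
      (simp_all add: matrix_add_ldistrib matrix_add_rdistrib trace_add
        matrix_scalar_ac scalar_matrix_assoc[symmetric] trace_scaleR)
  then show ?thesis by (simp add: linear_conv_bounded_linear)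
qed

lemma lindblad_semigroup_trace_derivative:
  "((\<lambda>t. trace (P ** lindblad_semigroup H h A t \<rho> ** P)) has_vector_derivative
      trace (P ** lindblad H h A \<rho> ** P)) (at 0 within S)"
  unfolding lindblad_semigroup_def
  by (rule exp_series_functional_has_vector_derivative
      [OF bounded_linear_lindblad bounded_linear_compressed_trace])

text \<open>Since \<open>0\<close> is a limit point of \<open>[0,\<infinity>)\<close>, derivatives there are unique; so the
  derivative vanishes iff the flux does.\<close>
lemma lazy_at_iff_flux_zero:
  "((\<lambda>t. trace (P ** lindblad_semigroup H h A t \<rho> ** P)) has_vector_derivative 0) (at 0 within {0..})
     \<longleftrightarrow> trace (P ** lindblad H h A \<rho> ** P) = 0"
proof -
  have "{0::real..} - {0} = {0<..}" by auto
  then have "at (0::real) within {0..} \<noteq> bot" by (simp add: at_within_eq_bot_iff)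
  then show ?thesis
    using lindblad_semigroup_trace_derivative vector_derivative_unique_within by metis
qed

lemma proj_sandwich_absorb:
  assumes "P ** P = P" and "\<rho> = P ** \<rho> ** P"
  shows "P ** \<rho> = \<rho>" and "\<rho> ** P = \<rho>"
  using assms by (metis matrix_mul_assoc)+

text \<open>Flux formula: for \<open>\<rho>\<close> supported in \<open>P\<H>\<close>, the Hamiltonian part and the
  anticommutator part cancel under the cyclic trace, leaving only the jump terms
  \<open>Tr (P h \<rho> h\<^sup>\<dagger>) - Tr (h \<rho> h\<^sup>\<dagger>)\<close>, i.e. minus the population leaking out of \<open>P\<H>\<close>.\<close>
lemma compressed_trace_lindblad:
  fixes P H \<rho> :: "complex^'n^'n" and h :: "'a \<Rightarrow> complex^'n^'n"
  assumes PP: "P ** P = P" and P\<rho>: "P ** \<rho> = \<rho>" and \<rho>P: "\<rho> ** P = \<rho>"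
  shows "trace (P ** lindblad H h A \<rho> ** P) =
    (\<Sum>\<alpha>\<in>A. trace (P ** h \<alpha> ** \<rho> ** cadj (h \<alpha>)) - trace (h \<alpha> ** \<rho> ** cadj (h \<alpha>)))"
proof -
  have cyclic: "trace (P ** X ** P) = trace (X ** P)" for X
    by (metis PP matrix_mul_assoc trace_mul_sym)
  have expand: "trace (lindblad H h A \<rho> ** P) = - \<i> * (trace (H ** \<rho> ** P) - trace (\<rho> ** H ** P))
     + (\<Sum>\<alpha>\<in>A. trace (h \<alpha> ** \<rho> ** cadj (h \<alpha>) ** P)
        - 1/2 * (trace (cadj (h \<alpha>) ** h \<alpha> ** \<rho> ** P) + trace (\<rho> ** cadj (h \<alpha>) ** h \<alpha> ** P)))"
    unfolding lindblad_def
    by (simp add: matrix_add_rdistrib matrix_diff_rdistrib csmat_mult_left matrix_sum_rdistrib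
        trace_add trace_sub trace_csmat trace_sum)
  have hamiltonian: "trace (H ** \<rho> ** P) = trace (\<rho> ** H ** P)"
    by (metis P\<rho> \<rho>P matrix_mul_assoc trace_mul_sym)
  have jump: "trace (g ** \<rho> ** cadj g ** P) = trace (P ** g ** \<rho> ** cadj g)"
    and anticomm_left: "trace (cadj g ** g ** \<rho> ** P) = trace (g ** \<rho> ** cadj g)"
    and anticomm_right: "trace (\<rho> ** cadj g ** g ** P) = trace (g ** \<rho> ** cadj g)" for g
    by (metis P\<rho> \<rho>P trace_mul_sym matrix_mul_assoc)+
  show ?thesis
    unfolding cyclic expand hamiltonian jump anticomm_left anticomm_right by simp
qed

lemma flux_zero_if_invariant:
  fixes P H \<rho> :: "complex^'n^'n" and h :: "'a \<Rightarrow> complex^'n^'n"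
  assumes PP: "P ** P = P" and P\<rho>: "P ** \<rho> = \<rho>" and \<rho>P: "\<rho> ** P = \<rho>"
    and invariant: "\<forall>\<alpha>\<in>A. h \<alpha> ** P = P ** h \<alpha> ** P"
  shows "trace (P ** lindblad H h A \<rho> ** P) = 0"
proof -
  have "P ** h \<alpha> ** \<rho> = h \<alpha> ** \<rho>" if "\<alpha> \<in> A" for \<alpha>
    using invariant that P\<rho> by (metis matrix_mul_assoc)
  then show ?thesis
    unfolding compressed_trace_lindblad[OF PP P\<rho> \<rho>P] by simp
qed

definition outer :: "complex^'n \<Rightarrow> complex^'n \<Rightarrow> complex^'n^'n" where
  "outer u w = (\<chi> i j. u $ i * cnj (w $ j))"

lemma outer_mult: "A ** outer u w ** cadj B = outer (A *v u) (B *v w)"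
  by (simp add: outer_def cadj_def matrix_matrix_mult_def matrix_vector_mult_def vec_eq_iff
      sum_distrib_left sum_distrib_right mult_ac)

lemma trace_outer: "trace (outer u w) = cinner w u"
  by (simp add: trace_def outer_def cinner_def mult.commute)

lemma cinner_adj: "cinner (A *v x) y = cinner x (cadj A *v y)"
  unfolding cinner_def cadj_def matrix_vector_mult_def
  by (simp add: sum_distrib_left sum_distrib_right mult_ac) (rule sum.swap)

lemma cinner_self_norm: "cinner y y = of_real ((norm y)\<^sup>2)"
  unfolding cinner_def norm_vec_def L2_set_def
  by (simp add: sum_nonneg of_real_sum complex_norm_square mult.commute del: of_real_power)

lemma cinner_outer: "cinner x (outer v v *v x) = of_real ((cmod (cinner v x))\<^sup>2)"
proof -
  have "cinner x (outer v v *v x) = cnj (cinner v x) * cinner v x"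
    unfolding cinner_def outer_def matrix_vector_mult_def
    by (simp add: sum_distrib_left sum_distrib_right mult_ac) (rule sum.swap)
  then show ?thesis by (simp add: complex_norm_square mult.commute del: of_real_power)
qed

lemma density_matrix_outer:
  assumes "cinner v v = 1"
  shows "density_matrix (outer v v)"
  unfolding density_matrix_def cinner_outer by (simp add: trace_outer assms)

lemma matrix_vector_scaleR: "A *v (r *\<^sub>R x) = r *\<^sub>R (A *v (x::complex^'n))"
  by (simp add: matrix_vector_mult_def vec_eq_iff scaleR_sum_right)

lemma cinner_diff_left: "cinner (x - y) z = cinner x z - cinner y z"
  by (simp add: cinner_def algebra_simps sum_subtractf)

lemma cinner_diff_right: "cinner z (x - y) = cinner z x - cinner z y"
  by (simp add: cinner_def algebra_simps sum_subtractf)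

lemma orth_proj_defect:
  assumes "orth_proj P"
  shows "cinner w (P *v w) - cinner w w = - of_real ((norm (w - P *v w))\<^sup>2)"
proof -
  have PP: "P ** P = P" and sa: "cadj P = P" using assms by (auto simp: orth_proj_def)
  have "cinner (P *v w) w = cinner w (P *v w)" using cinner_adj[of P w w] sa by simp
  moreover have "cinner (P *v w) (P *v w) = cinner w (P *v w)"
    using cinner_adj[of P w "P *v w"] sa PP by (simp add: matrix_vector_mul_assoc)
  ultimately show ?thesis
    unfolding cinner_self_norm[symmetric] by (simp add: cinner_diff_left cinner_diff_right)
qed

lemma jump_term_pure_state:
  assumes "orth_proj P"
  shows "trace (P ** g ** outer v v ** cadj g) - trace (g ** outer v v ** cadj g)
           = - of_real ((norm (g *v v - P *v (g *v v)))\<^sup>2)"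
  using outer_mult[of "P ** g" v v g] outer_mult[of g v v g] orth_proj_defect[OF assms]
  by (simp add: trace_outer matrix_mul_assoc matrix_vector_mul_assoc[symmetric])

text \<open>Necessity for pure states: zero flux for \<open>|v\<rangle>\<langle>v|\<close> with \<open>v \<in> P\<H>\<close> forces the
  (non-negative) leaks of all jump operators to vanish, so \<open>h\<^sub>\<alpha> v \<in> P\<H>\<close>.\<close>
lemma invariant_on_unit_vector:
  fixes P H :: "complex^'n^'n" and h :: "'a \<Rightarrow> complex^'n^'n"
  assumes P: "orth_proj P" and "finite A" and "\<alpha> \<in> A"
    and Pv: "P *v v = v" and unit: "cinner v v = 1"
    and flux: "trace (P ** lindblad H h A (outer v v) ** P) = 0"
  shows "h \<alpha> *v v = P *v (h \<alpha> *v v)"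
proof -
  define leak where "leak \<beta> = (norm (h \<beta> *v v - P *v (h \<beta> *v v)))\<^sup>2" for \<beta>
  have PP: "P ** P = P" and sa: "cadj P = P" using P by (auto simp: orth_proj_def)
  have sandwich: "outer v v = P ** outer v v ** P"
    using outer_mult[of P v v P] sa Pv by simp
  have jump: "trace (P ** h \<beta> ** outer v v ** cadj (h \<beta>)) - trace (h \<beta> ** outer v v ** cadj (h \<beta>))
      = - of_real (leak \<beta>)" for \<beta>
    unfolding leak_def by (rule jump_term_pure_state[OF P])
  have "complex_of_real (\<Sum>\<beta>\<in>A. leak \<beta>) = 0"
    using flux unfolding compressed_trace_lindblad[OF PP proj_sandwich_absorb[OF PP sandwich]] jump
    by (simp add: sum_negf)
  then have "(\<Sum>\<beta>\<in>A. leak \<beta>) = 0" by (simp only: of_real_eq_0_iff)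
  then have "leak \<alpha> = 0"
    using sum_nonneg_eq_0_iff[OF \<open>finite A\<close>, of leak] \<open>\<alpha> \<in> A\<close> by (simp add: leak_def)
  then show ?thesis by (simp add: leak_def)
qed

text \<open>Necessity on all of \<open>P\<H>\<close>, by normalising a nonzero \<open>y \<in> P\<H>\<close>.\<close>
lemma invariant_on_range:
  fixes P H :: "complex^'n^'n" and h :: "'a \<Rightarrow> complex^'n^'n"
  assumes P: "orth_proj P" and "finite A" and "\<alpha> \<in> A" and Py: "P *v y = y"
    and lazy: "\<forall>\<rho>. density_matrix \<rho> \<and> \<rho> = P ** \<rho> ** P \<longrightarrow> trace (P ** lindblad H h A \<rho> ** P) = 0"
  shows "h \<alpha> *v y = P *v (h \<alpha> *v y)"
proof (cases "y = 0")
  case True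
  then show ?thesis by simp
next
  case False
  define v where "v = sgn y"
  have y: "y = norm y *\<^sub>R v" using False by (simp add: v_def sgn_div_norm)
  have unit: "cinner v v = 1" using False by (simp add: v_def cinner_self_norm norm_sgn)
  have Pv: "P *v v = v" using Py by (simp add: v_def sgn_div_norm matrix_vector_scaleR)
  have "outer v v = P ** outer v v ** P"
    using outer_mult[of P v v P] P Pv by (simp add: orth_proj_def)
  then have "trace (P ** lindblad H h A (outer v v) ** P) = 0"
    using lazy density_matrix_outer[OF unit] by blast
  then have "h \<alpha> *v v = P *v (h \<alpha> *v v)"
    by (rule invariant_on_unit_vector[OF P \<open>finite A\<close> \<open>\<alpha> \<in> A\<close> Pv unit])
  then show ?thesis using y by (metis matrix_vector_scaleR)
qed

lemma compression_eq_if_range_invariant: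
  fixes P G :: "complex^'n^'n"
  assumes "P ** P = P" and "\<And>y. P *v y = y \<Longrightarrow> G *v y = P *v (G *v y)"
  shows "G ** P = P ** G ** P"
proof (rule matrix_eq[THEN iffD2], intro allI)
  fix x
  have "P *v (P *v x) = P *v x" by (simp add: matrix_vector_mul_assoc assms(1))
  then show "(G ** P) *v x = (P ** G ** P) *v x"
    using assms(2) by (metis matrix_vector_mul_assoc)
qed

theorem mainTheorem6:
  fixes H P :: "complex^'n^'n" and h :: "'a \<Rightarrow> complex^'n^'n" and A :: "'a set"
  assumes "finite A" and "cadj H = H" and "orth_proj P"
  shows "(\<forall>\<rho>. density_matrix \<rho> \<and> \<rho> = P ** \<rho> ** P \<longrightarrow>
            ((\<lambda>t. trace (P ** lindblad_semigroup H h A t \<rho> ** P)) has_vector_derivative 0)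
              (at 0 within {0..}))
         \<longleftrightarrow> (\<forall>\<alpha>\<in>A. h \<alpha> ** P = P ** h \<alpha> ** P)"
  unfolding lazy_at_iff_flux_zero
proof
  have PP: "P ** P = P" using assms(3) by (simp add: orth_proj_def)
  show "\<forall>\<alpha>\<in>A. h \<alpha> ** P = P ** h \<alpha> ** P"
    if "\<forall>\<rho>. density_matrix \<rho> \<and> \<rho> = P ** \<rho> ** P \<longrightarrow> trace (P ** lindblad H h A \<rho> ** P) = 0"
    using compression_eq_if_range_invariant[OF PP] invariant_on_range[OF assms(3,1) _ _ that]
    by blast
  show "\<forall>\<rho>. density_matrix \<rho> \<and> \<rho> = P ** \<rho> ** P \<longrightarrow> trace (P ** lindblad H h A \<rho> ** P) = 0"
    if "\<forall>\<alpha>\<in>A. h \<alpha> ** P = P ** h \<alpha> ** P"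
    using flux_zero_if_invariant[OF PP proj_sandwich_absorb[OF PP] that] by blast
qed

end
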